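(* Fix $n\in\mathbb{N}$. Let $S=(S_t)_{t\ge0}$ be the subordinator with Laplace exponent $\Phi$, and let $\varepsilon_1,\dots,\varepsilon_n$ be i.i.d. standard exponential random variables independent of $S$, with order statistics $\varepsilon_{n:n}<\dots<\varepsilon_{n:1}$; set $\varepsilon_{n:n+1}:=0$ and $\varepsilon_{n:0}:=+\infty$. Let $1\le k\le m\le n$. Then, for $t\ge0$, conditionally given $S_t=s$ with $s\in(\varepsilon_{n:m+1},\varepsilon_{n:m})$, the subordinator jumps over the level $\varepsilon_{n:m}$ at probability rate $\Phi(m)$. Moreover, the probability rate of a jump of $S$ at which $S$ jumps from its current position to a point of the interval $(\varepsilon_{n:m-k+1},\varepsilon_{n:m-k})$ (i.e. passes exactly the $k$ levels $\varepsilon_{n:m},\dots,\varepsilon_{n:m-k+1}$) is $\varphi_{m,k}$.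
   Context: Let $\nu$ be a measure on $(0,1)$ (no mass at $1$) satisfying $\int_0^1 x\,\nu(dx)<\infty$. For $1\le k\le m$ put $\lambda_{m,k}=\int_0^1 x^k(1-x)^{m-k}\nu(dx)$ and $\varphi_{m,k}=\binom{m}{k}\lambda_{m,k}$. Let $\Phi(z)=\int_0^1(1-(1-x)^z)\nu(dx)$, $z\ge0$, and let $S$ be the pure-jump subordinator with $\mathbb{E}e^{-zS_t}=e^{-t\Phi(z)}$ (its Lévy measure is the image of $\nu$ under $x\mapsto -\log(1-x)$). *)

theory Defs
  imports "HOL-Probability.Probability"
begin

definition Phi :: "real measure \<Rightarrow> real \<Rightarrow> real" where
  "Phi \<nu> z = (\<integral>x. (1 - (1 - x) powr z) \<partial>\<nu>)"

definition lam :: "real measure \<Rightarrow> nat \<Rightarrow> nat \<Rightarrow> real" where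
  "lam \<nu> m k = (\<integral>x. x ^ k * (1 - x) ^ (m - k) \<partial>\<nu>)"

definition varphi :: "real measure \<Rightarrow> nat \<Rightarrow> nat \<Rightarrow> real" where
  "varphi \<nu> m k = real (m choose k) * lam \<nu> m k"

definition levy_measure :: "real measure \<Rightarrow> real measure" where
  "levy_measure \<nu> = distr \<nu> borel (\<lambda>x. - ln (1 - x))"

definition exp_sample :: "nat \<Rightarrow> (nat \<Rightarrow> real) measure" where
  "exp_sample n = PiM {..<n} (\<lambda>_. density lborel (exponential_density 1))"

text \<open>Order statistics: ord_stat n w j = eps_{n:j}, the j-th largest value,
  with eps_{n:0} = +infinity and eps_{n:n+1} = 0.\<close>
definition ord_stat :: "nat \<Rightarrow> (nat \<Rightarrow> real) \<Rightarrow> nat \<Rightarrow> ereal" where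
  "ord_stat n w j = (if j = 0 then \<infinity> else if j > n then 0
      else ereal (rev (sort (map w [0..<n])) ! (j - 1)))"

definition cond_prob :: "'a measure \<Rightarrow> 'a set \<Rightarrow> 'a set \<Rightarrow> real" where
  "cond_prob M A B = measure M (A \<inter> B) / measure M B"

definition cond_event :: "nat \<Rightarrow> nat \<Rightarrow> real \<Rightarrow> (nat \<Rightarrow> real) set" where
  "cond_event n m s = {w \<in> space (exp_sample n).
      ord_stat n w (Suc m) < ereal s \<and> ereal s < ord_stat n w m}"

text \<open>Probability rate of a jump of S from the current position s with property P:
  each jump size y occurs at rate levy_measure nu (dy); the rate is the integral over
  the Levy measure of the conditional probability (given the conditioning event)
  that a jump of size y from s has property P.\<close>
definition jump_rate :: "real measure \<Rightarrow> nat \<Rightarrow> nat \<Rightarrow> real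
      \<Rightarrow> ((nat \<Rightarrow> real) \<Rightarrow> real \<Rightarrow> bool) \<Rightarrow> ennreal" where
  "jump_rate \<nu> n m s P = (\<integral>\<^sup>+ y. ennreal (cond_prob (exp_sample n)
      {w \<in> space (exp_sample n). P w y} (cond_event n m s)) \<partial>(levy_measure \<nu>))"

end

theory Submission
  imports Defs
begin

(* Conditionally on S_t = s lying between the order statistics eps_{n:m+1} and eps_{n:m} of
   n independent standard exponential variables, a jump of size y > 0 from s passes eps_{n:m}
   with probability 1 - e^{-ym} and passes exactly the k levels eps_{n:m},...,eps_{n:m-k+1}
   with probability C(m,k) e^{-y(m-k)} (1 - e^{-y})^k; this is memorylessness of the
   exponential law.  Integrating against the Levy measure, i.e. against nu after the
   substitution y = -ln(1 - x), gives Phi(m) and varphi(m,k). *)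

abbreviation Exp1 :: "real measure" where
  "Exp1 \<equiv> density lborel (\<lambda>x. ennreal (exponential_density 1 x))"

lemma prob_space_Exp1: "prob_space Exp1"
  by (rule prob_space_exponential_density) simp

lemma Exp1_singleton: "measure Exp1 {a} = 0"
proof -
  have "AE x in lborel. x \<in> {a} \<longrightarrow> ennreal (exponential_density 1 x) = 0"
    using AE_lborel_singleton[of a] by (rule eventually_mono) auto
  then have "{a} \<in> null_sets Exp1"
    by (subst null_sets_density_iff) auto
  then show ?thesis by (simp add: measure_def null_setsD1)
qed

lemma Exp1_greaterThan: assumes "0 \<le> a" shows "measure Exp1 {a<..} = exp (- a)"
proof -
  interpret prob_space Exp1 by (rule prob_space_Exp1)
  have "distributed Exp1 lborel (\<lambda>x. x) (exponential_density 1)"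
    unfolding distributed_def by (auto simp: distr_id2)
  then have "\<P>(x in Exp1. a < x) = exp (- a * 1)"
    by (rule exponential_distributedD_gt[OF _ assms]) simp
  moreover have "{x \<in> space Exp1. a < x} = {a<..}" by auto
  ultimately show ?thesis by simp
qed

lemma Exp1_atLeast: assumes "0 \<le> a" shows "measure Exp1 {a..} = exp (- a)"
proof -
  interpret prob_space Exp1 by (rule prob_space_Exp1)
  have "measure Exp1 ({a<..} \<union> {a}) = measure Exp1 {a<..} + measure Exp1 {a}"
    by (rule finite_measure_Union) auto
  moreover have "{a<..} \<union> {a} = {a..}" by auto
  ultimately show ?thesis using Exp1_greaterThan[OF assms] Exp1_singleton by simp
qed

lemma Exp1_lessThan: assumes "0 \<le> a" shows "measure Exp1 {..<a} = 1 - exp (- a)"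
proof -
  interpret prob_space Exp1 by (rule prob_space_Exp1)
  have "{..<a} = space Exp1 - {a..}" by auto
  then show ?thesis using prob_compl[of "{a..}"] Exp1_atLeast[OF assms] by simp
qed

lemma Exp1_between:
  assumes "0 \<le> a" "a < b" shows "measure Exp1 {a<..<b} = exp (- a) - exp (- b)"
proof -
  interpret prob_space Exp1 by (rule prob_space_Exp1)
  have "measure Exp1 ({a<..<b} \<union> {b..}) = measure Exp1 {a<..<b} + measure Exp1 {b..}"
    by (rule finite_measure_Union) auto
  moreover have "{a<..<b} \<union> {b..} = {a<..}" using assms by auto
  ultimately show ?thesis using Exp1_greaterThan[OF assms(1)] Exp1_atLeast[of b] assms by simp
qed

lemma sorted_nth_threshold:
  assumes "sorted ys" "\<And>x y. x \<le> y \<Longrightarrow> P x \<Longrightarrow> P y" "i < length ys"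
  shows "P (ys ! i) \<longleftrightarrow> length ys - length (filter P ys) \<le> i"
  using assms(1,3)
proof (induction ys arbitrary: i)
  case Nil
  then show ?case by simp
next
  case (Cons x ys)
  show ?case
  proof (cases "P x")
    case True
    then have all: "\<forall>z\<in>set (x # ys). P z" using Cons.prems(1) assms(2) by auto
    then have "P ((x # ys) ! i)" using Cons.prems(2) nth_mem by blast
    then show ?thesis using all by simp
  next
    case False
    show ?thesis
    proof (cases i)
      case 0
      have "length (filter P ys) < Suc (length ys)" by (simp add: le_imp_less_Suc)
      then show ?thesis using False 0 by simp
    next
      case (Suc i')
      then show ?thesis using False Cons.IH[of i'] Cons.prems length_filter_le[of P ys] by auto
    qed
  qed
qed

lemma ord_stat_nth:
  assumes "1 \<le> j" "j \<le> n"
  shows "ord_stat n w j = ereal (sort (map w [0..<n]) ! (n - j))"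
  using assms by (simp add: ord_stat_def rev_nth)

lemma length_filter_sorted_sample:
  "length (filter P (sort (map w [0..<n]))) = card {i. i < n \<and> P (w i)}"
proof -
  have "length (filter P (sort (map w [0..<n]))) = length (filter P (map w [0..<n]))"
    by (metis mset_filter mset_sort size_mset)
  also have "\<dots> = card {i. i < n \<and> P (w i)}"
    unfolding length_filter_conv_card by (rule arg_cong[where f=card]) auto
  finally show ?thesis .
qed

lemma card_sample_le: "card {i. i < n \<and> P i} \<le> n"
  by (rule order_trans[OF card_mono[of "{..<n}"]]) auto

lemma ord_stat_greater_iff:
  assumes "j \<le> n"
  shows "ereal a < ord_stat n w j \<longleftrightarrow> j \<le> card {i. i < n \<and> a < w i}"
proof (cases "j = 0")
  case False
  let ?ys = "sort (map w [0..<n])"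
  have "a < ?ys ! (n - j) \<longleftrightarrow> n - card {i. i < n \<and> a < w i} \<le> n - j"
    using sorted_nth_threshold[of ?ys "\<lambda>x. a < x" "n - j"] assms False
      length_filter_sorted_sample[of "\<lambda>x. a < x" w n] by simp
  moreover have "n - card {i. i < n \<and> a < w i} \<le> n - j \<longleftrightarrow> j \<le> card {i. i < n \<and> a < w i}"
    using card_sample_le[of n "\<lambda>i. a < w i"] assms by linarith
  ultimately show ?thesis using ord_stat_nth[of j n w] assms False by simp
qed (simp add: ord_stat_def)

lemma ord_stat_less_iff:
  assumes "1 \<le> j" "j \<le> Suc n" "0 < a"
  shows "ord_stat n w j < ereal a \<longleftrightarrow> card {i. i < n \<and> a \<le> w i} < j"
proof (cases "j = Suc n")
  case False
  let ?ys = "sort (map w [0..<n])"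
  have "a \<le> ?ys ! (n - j) \<longleftrightarrow> n - card {i. i < n \<and> a \<le> w i} \<le> n - j"
    using sorted_nth_threshold[of ?ys "\<lambda>x. a \<le> x" "n - j"] assms False
      length_filter_sorted_sample[of "\<lambda>x. a \<le> x" w n] by simp
  then show ?thesis
    using ord_stat_nth[of j n w] card_sample_le[of n "\<lambda>i. a \<le> w i"] assms False
    by (auto simp: not_le[symmetric])
qed (use assms card_sample_le[of n "\<lambda>i. a \<le> w i"] in \<open>simp add: ord_stat_def\<close>)

lemma ord_stat_antimono:
  assumes "i \<le> j" "j \<le> n"
  shows "ord_stat n w j \<le> ord_stat n w i"
proof (cases "i = 0")
  case False
  have "sort (map w [0..<n]) ! (n - j) \<le> sort (map w [0..<n]) ! (n - i)"
    by (rule sorted_nth_mono) (use assms False in auto)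
  then show ?thesis using ord_stat_nth[of i n w] ord_stat_nth[of j n w] assms False by simp
qed (simp add: ord_stat_def)

definition level_split :: "nat \<Rightarrow> real \<Rightarrow> nat set \<Rightarrow> (nat \<Rightarrow> real) \<Rightarrow> bool" where
  "level_split n t J w \<longleftrightarrow> (\<forall>i<n. (i \<in> J \<longrightarrow> t < w i) \<and> (i \<notin> J \<longrightarrow> w i < t))"

lemma level_split_sets:
  assumes "level_split n t J w" "J \<subseteq> {..<n}"
  shows "{i. i < n \<and> t < w i} = J" "{i. i < n \<and> t \<le> w i} = J"
  using assms unfolding level_split_def by force+

lemma level_split_nested:
  assumes "level_split n s I w" "level_split n t J w" "s < t" "J \<subseteq> {..<n}"
  shows "J \<subseteq> I"
  using assms unfolding level_split_def by force

lemma ord_stat_window: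
  assumes "j \<le> n" "0 < t"
  shows "(ord_stat n w (Suc j) < ereal t \<and> ereal t < ord_stat n w j)
     \<longleftrightarrow> (\<exists>J. J \<subseteq> {..<n} \<and> card J = j \<and> level_split n t J w)"
proof -
  let ?G = "{i. i < n \<and> t < w i}" and ?H = "{i. i < n \<and> t \<le> w i}"
  have less_iff: "ord_stat n w (Suc j) < ereal t \<longleftrightarrow> card ?H < Suc j"
    by (rule ord_stat_less_iff) (use assms in auto)
  have greater_iff: "ereal t < ord_stat n w j \<longleftrightarrow> j \<le> card ?G"
    by (rule ord_stat_greater_iff) (use assms in auto)
  have "card ?H \<le> j \<and> j \<le> card ?G \<longleftrightarrow> ?G = ?H \<and> card ?G = j"
  proof
    assume card: "card ?H \<le> j \<and> j \<le> card ?G"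
    have "?G \<subseteq> ?H" "finite ?H" by auto
    then have "?G = ?H" using card card_seteq[of ?H ?G] by linarith
    then show "?G = ?H \<and> card ?G = j" using card by simp
  next
    assume "?G = ?H \<and> card ?G = j"
    then have "card ?H = j" "card ?G = j" by (metis, blast)
    then show "card ?H \<le> j \<and> j \<le> card ?G" by simp
  qed
  also have "?G = ?H \<and> card ?G = j \<longleftrightarrow> (\<exists>J. J \<subseteq> {..<n} \<and> card J = j \<and> level_split n t J w)"
  proof
    assume "?G = ?H \<and> card ?G = j"
    then have "level_split n t ?G w"
      unfolding level_split_def by (metis (mono_tags, lifting) mem_Collect_eq not_le)
    then show "\<exists>J. J \<subseteq> {..<n} \<and> card J = j \<and> level_split n t J w"
      using \<open>?G = ?H \<and> card ?G = j\<close> by blast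
  next
    assume "\<exists>J. J \<subseteq> {..<n} \<and> card J = j \<and> level_split n t J w"
    then obtain J where "J \<subseteq> {..<n}" "card J = j" "level_split n t J w" by blast
    then show "?G = ?H \<and> card ?G = j" using level_split_sets[of n t J w] by simp
  qed
  finally show ?thesis using less_iff greater_iff by (simp add: less_Suc_eq_le)
qed

lemma prob_space_exp_sample: "prob_space (exp_sample n)"
  unfolding exp_sample_def by (rule prob_space_PiM) (simp add: prob_space_Exp1)

lemma space_exp_sample: "space (exp_sample n) = PiE {..<n} (\<lambda>_. UNIV)"
  by (simp add: exp_sample_def space_PiM)

lemma box_in_sets:
  "(\<And>i. i < n \<Longrightarrow> F i \<in> sets borel) \<Longrightarrow> PiE {..<n} F \<in> sets (exp_sample n)"
  unfolding exp_sample_def by (rule sets_PiM_I_finite) auto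

lemma measure_box:
  assumes "\<And>i. i < n \<Longrightarrow> F i \<in> sets borel"
  shows "measure (exp_sample n) (PiE {..<n} F) = (\<Prod>i<n. measure Exp1 (F i))"
proof -
  interpret finite_product_prob_space "\<lambda>_. Exp1" "{..<n}"
    by (auto simp: finite_product_prob_space_def finite_product_sigma_finite_def
        product_prob_space_def product_sigma_finite_def product_prob_space_axioms_def
        finite_product_sigma_finite_axioms_def prob_space_Exp1 prob_space_imp_sigma_finite)
  show ?thesis
    unfolding exp_sample_def by (rule finite_measure_PiM_emb) (use assms in auto)
qed

lemma prod_two_valued:
  assumes "finite A" "I \<subseteq> A"
  shows "(\<Prod>i\<in>A. if i \<in> I then a else b) = a ^ card I * (b::real) ^ (card A - card I)"
proof -
  have "(\<Prod>i\<in>A. if i \<in> I then a else b) = (\<Prod>i\<in>A \<inter> {x. x \<in> I}. a) * (\<Prod>i\<in>A \<inter> - {x. x \<in> I}. b)"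
    by (rule prod.If_cases) (rule assms)
  also have "A \<inter> {x. x \<in> I} = I" using assms by auto
  also have "A \<inter> - {x. x \<in> I} = A - I" by auto
  finally show ?thesis
    using assms by (simp add: card_Diff_subset finite_subset)
qed

lemma prod_three_valued:
  assumes "finite A" "I \<subseteq> A" "J \<subseteq> I"
  shows "(\<Prod>i\<in>A. if i \<in> J then a else if i \<in> I then b else c) =
     a ^ card J * b ^ (card I - card J) * (c::real) ^ (card A - card I)"
proof -
  have "(\<Prod>i\<in>A. if i \<in> J then a else if i \<in> I then b else c)
      = (\<Prod>i\<in>A. if i \<in> I then (if i \<in> J then a else b) else c)"
    using assms(3) by (intro prod.cong) auto
  also have "\<dots> = (\<Prod>i\<in>I. if i \<in> J then a else b) * c ^ (card A - card I)"
    using prod.If_cases[OF assms(1), of "\<lambda>i. i \<in> I" "\<lambda>i. if i \<in> J then a else b" "\<lambda>_. c"] assms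
    by (simp add: Int_absorb1 Diff_eq[symmetric] card_Diff_subset finite_subset)
  also have "(\<Prod>i\<in>I. if i \<in> J then a else b) = a ^ card J * b ^ (card I - card J)"
    using assms by (intro prod_two_valued) (auto intro: finite_subset)
  finally show ?thesis .
qed

lemma disjoint_pattern_boxes:
  assumes "\<And>i. i \<in> A \<Longrightarrow> U \<inter> V i = {}"
  shows "disjoint_family_on (\<lambda>J. PiE A (\<lambda>i. if i \<in> J then U else V i)) (Pow A)"
  unfolding disjoint_family_on_def
proof (intro ballI impI)
  fix J1 J2 assume J: "J1 \<in> Pow A" "J2 \<in> Pow A" "J1 \<noteq> J2"
  show "PiE A (\<lambda>i. if i \<in> J1 then U else V i) \<inter> PiE A (\<lambda>i. if i \<in> J2 then U else V i) = {}"
  proof (rule ccontr)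
    assume "\<not> ?thesis"
    then obtain w where w1: "w \<in> PiE A (\<lambda>i. if i \<in> J1 then U else V i)"
      and w2: "w \<in> PiE A (\<lambda>i. if i \<in> J2 then U else V i)" by blast
    obtain i where i: "i \<in> A" "i \<in> J1 \<longleftrightarrow> i \<notin> J2" using J by blast
    then show False using PiE_mem[OF w1 i(1)] PiE_mem[OF w2 i(1)] assms[OF i(1)]
      by (auto split: if_splits)
  qed
qed

lemma cond_prob_partition:
  assumes "prob_space M" "finite II" "II \<noteq> {}" "disjoint_family_on C II"
    and "\<And>I. I \<in> II \<Longrightarrow> C I \<in> sets M" "\<And>I. I \<in> II \<Longrightarrow> measure M (C I) > 0"
    and "\<And>I. I \<in> II \<Longrightarrow> A \<inter> C I \<in> sets M"
    and "\<And>I. I \<in> II \<Longrightarrow> measure M (A \<inter> C I) = c * measure M (C I)"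
    and "B = (\<Union>I\<in>II. C I)"
  shows "cond_prob M A B = c"
proof -
  interpret prob_space M by fact
  have mB: "measure M B = (\<Sum>I\<in>II. measure M (C I))"
    unfolding assms(9) by (rule finite_measure_finite_Union) (use assms in auto)
  have "A \<inter> B = (\<Union>I\<in>II. A \<inter> C I)" using assms(9) by auto
  then have "measure M (A \<inter> B) = (\<Sum>I\<in>II. measure M (A \<inter> C I))"
    by (simp only:) (rule finite_measure_finite_Union,
        use assms in \<open>auto simp: disjoint_family_on_def\<close>)
  also have "\<dots> = c * measure M B" unfolding mB sum_distrib_left using assms(8) by simp
  finally have AB: "measure M (A \<inter> B) = c * measure M B" .
  obtain I0 where "I0 \<in> II" using assms(3) by blast
  then have "measure M (C I0) \<le> measure M B"
    unfolding mB by (intro member_le_sum) (use assms in auto)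
  then have "measure M B > 0" using assms(6)[OF \<open>I0 \<in> II\<close>] by linarith
  then show ?thesis using AB by (simp add: cond_prob_def)
qed

definition cell :: "nat \<Rightarrow> real \<Rightarrow> nat set \<Rightarrow> (nat \<Rightarrow> real) set" where
  "cell n s I = PiE {..<n} (\<lambda>i. if i \<in> I then {s<..} else {..<s})"

definition cell_top :: "nat \<Rightarrow> real \<Rightarrow> real \<Rightarrow> nat set \<Rightarrow> (nat \<Rightarrow> real) set" where
  "cell_top n s t I = PiE {..<n} (\<lambda>i. if i \<in> I then {t..} else {..<s})"

definition cell_split :: "nat \<Rightarrow> real \<Rightarrow> real \<Rightarrow> nat set \<Rightarrow> nat set \<Rightarrow> (nat \<Rightarrow> real) set" where
  "cell_split n s t I J =
     PiE {..<n} (\<lambda>i. if i \<in> J then {t<..} else if i \<in> I then {s<..<t} else {..<s})"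

lemma mem_cell: "w \<in> cell n s I \<longleftrightarrow> w \<in> space (exp_sample n) \<and> level_split n s I w"
  unfolding cell_def level_split_def space_exp_sample by (auto simp: PiE_iff)

lemma mem_cell_split:
  assumes "J \<subseteq> I" "s < t"
  shows "w \<in> cell_split n s t I J \<longleftrightarrow> w \<in> cell n s I \<and> level_split n t J w"
  using assms unfolding cell_split_def mem_cell level_split_def space_exp_sample
  by (auto simp: PiE_iff split: if_splits) force+

lemma cond_event_cells:
  assumes "m \<le> n" "0 < s"
  shows "cond_event n m s = (\<Union>I\<in>{I. I \<subseteq> {..<n} \<and> card I = m}. cell n s I)"
  unfolding cond_event_def ord_stat_window[OF assms] by (auto simp: mem_cell)


lemma measure_cell:
  assumes "I \<subseteq> {..<n}" "0 \<le> s"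
  shows "measure (exp_sample n) (cell n s I) = exp (- s) ^ card I * (1 - exp (- s)) ^ (n - card I)"
proof -
  have "measure (exp_sample n) (cell n s I)
      = (\<Prod>i<n. measure Exp1 (if i \<in> I then {s<..} else {..<s}))"
    unfolding cell_def by (rule measure_box) auto
  also have "\<dots> = (\<Prod>i<n. if i \<in> I then exp (- s) else 1 - exp (- s))"
    by (rule prod.cong) (auto simp: Exp1_greaterThan Exp1_lessThan assms)
  finally show ?thesis using prod_two_valued[of "{..<n}" I] assms by simp
qed

lemma measure_cell_top:
  assumes "I \<subseteq> {..<n}" "0 \<le> s" "0 \<le> t"
  shows "measure (exp_sample n) (cell_top n s t I)
     = exp (- t) ^ card I * (1 - exp (- s)) ^ (n - card I)"
proof -
  have "measure (exp_sample n) (cell_top n s t I)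
      = (\<Prod>i<n. measure Exp1 (if i \<in> I then {t..} else {..<s}))"
    unfolding cell_top_def by (rule measure_box) auto
  also have "\<dots> = (\<Prod>i<n. if i \<in> I then exp (- t) else 1 - exp (- s))"
    by (rule prod.cong) (auto simp: Exp1_atLeast Exp1_lessThan assms)
  finally show ?thesis using prod_two_valued[of "{..<n}" I] assms by simp
qed

lemma measure_cell_split:
  assumes "J \<subseteq> I" "I \<subseteq> {..<n}" "0 \<le> s" "s < t"
  shows "measure (exp_sample n) (cell_split n s t I J) = exp (- t) ^ card J
     * (exp (- s) - exp (- t)) ^ (card I - card J) * (1 - exp (- s)) ^ (n - card I)"
proof -
  have "measure (exp_sample n) (cell_split n s t I J) = (\<Prod>i<n. measure Exp1
      (if i \<in> J then {t<..} else if i \<in> I then {s<..<t} else {..<s}))"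
    unfolding cell_split_def by (rule measure_box) auto
  also have "\<dots> = (\<Prod>i<n. if i \<in> J then exp (- t)
      else if i \<in> I then exp (- s) - exp (- t) else 1 - exp (- s))"
    by (rule prod.cong) (use assms in \<open>auto simp: Exp1_greaterThan Exp1_lessThan Exp1_between\<close>)
  finally show ?thesis using prod_three_valued[of "{..<n}" I J] assms by simp
qed

lemma cell_in_sets: "cell n s I \<in> sets (exp_sample n)"
  unfolding cell_def by (rule box_in_sets) auto

lemma cell_top_in_sets: "cell_top n s t I \<in> sets (exp_sample n)"
  unfolding cell_top_def by (rule box_in_sets) auto

lemma cell_split_in_sets: "cell_split n s t I J \<in> sets (exp_sample n)"
  unfolding cell_split_def by (rule box_in_sets) auto

lemma overshoot_in_cell:
  assumes "I \<subseteq> {..<n}" "card I = m" "1 \<le> m" "m \<le> n" "0 < s" "s < t"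
  shows "{w \<in> space (exp_sample n). ord_stat n w m < ereal t} \<inter> cell n s I
     = cell n s I - cell_top n s t I"
proof -
  have "ord_stat n w m < ereal t \<longleftrightarrow> w \<notin> cell_top n s t I" if w: "w \<in> cell n s I" for w
  proof -
    let ?H = "{i. i < n \<and> t \<le> w i}"
    have split: "level_split n s I w" using w by (simp add: mem_cell)
    have HI: "?H \<subseteq> I" using split assms(6) unfolding level_split_def by force
    have fin: "finite I" using assms(1) finite_subset by blast
    have "ord_stat n w m < ereal t \<longleftrightarrow> card ?H < card I"
      using ord_stat_less_iff[of m n t w] assms by simp
    also have "\<dots> \<longleftrightarrow> ?H \<noteq> I"
      using HI fin psubset_card_mono[of I ?H] by auto
    also have "\<dots> \<longleftrightarrow> \<not> (\<forall>i\<in>I. t \<le> w i)"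
      using HI assms(1) by auto
    also have "(\<forall>i\<in>I. t \<le> w i) \<longleftrightarrow> w \<in> cell_top n s t I"
      using w split assms(1) unfolding mem_cell cell_top_def space_exp_sample level_split_def
      by (auto simp: PiE_iff)
    finally show ?thesis .
  qed
  moreover have "cell n s I \<subseteq> space (exp_sample n)" by (auto simp: mem_cell)
  ultimately show ?thesis by blast
qed


lemma exact_pass_in_cell:
  assumes "I \<subseteq> {..<n}" "card I = m" "k \<le> m" "m \<le> n" "0 < s" "s < t"
  shows "{w \<in> space (exp_sample n). ord_stat n w (m - k + 1) < ereal t
      \<and> ereal t < ord_stat n w (m - k)} \<inter> cell n s I
     = (\<Union>J\<in>{J. J \<subseteq> I \<and> card J = m - k}. cell_split n s t I J)" (is "?L = ?R")
proof -
  have "w \<in> ?L \<longleftrightarrow> w \<in> ?R" for w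
  proof (cases "w \<in> cell n s I")
    case True
    then have split: "level_split n s I w" "w \<in> space (exp_sample n)" by (simp_all add: mem_cell)
    have "w \<in> ?L \<longleftrightarrow> (\<exists>J. J \<subseteq> {..<n} \<and> card J = m - k \<and> level_split n t J w)"
      using True split(2) ord_stat_window[of "m - k" n t w] assms by simp
    also have "\<dots> \<longleftrightarrow> (\<exists>J. J \<subseteq> I \<and> card J = m - k \<and> level_split n t J w)"
      using level_split_nested[OF split(1) _ assms(6)] assms(1) by blast
    also have "\<dots> \<longleftrightarrow> w \<in> ?R" using mem_cell_split[OF _ assms(6)] True by auto
    finally show ?thesis .
  qed (use mem_cell_split[OF _ assms(6)] in auto)
  then show ?thesis by blast
qed

lemma cond_prob_from_cells:
  assumes "m \<le> n" "0 < s"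
    and "\<And>I. I \<subseteq> {..<n} \<Longrightarrow> card I = m \<Longrightarrow> A \<inter> cell n s I \<in> sets (exp_sample n)"
    and "\<And>I. I \<subseteq> {..<n} \<Longrightarrow> card I = m \<Longrightarrow>
           measure (exp_sample n) (A \<inter> cell n s I) = c * measure (exp_sample n) (cell n s I)"
  shows "cond_prob (exp_sample n) A (cond_event n m s) = c"
proof (rule cond_prob_partition[OF prob_space_exp_sample _ _ _ _ _ _ _ cond_event_cells[OF assms(1,2)]])
  show "finite {I. I \<subseteq> {..<n} \<and> card I = m}" by simp
  have "{..<m} \<in> {I. I \<subseteq> {..<n} \<and> card I = m}" using assms(1) by auto
  then show "{I. I \<subseteq> {..<n} \<and> card I = m} \<noteq> {}" by blast
  have "disjoint_family_on (cell n s) (Pow {..<n})"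
    unfolding cell_def by (rule disjoint_pattern_boxes) auto
  then show "disjoint_family_on (cell n s) {I. I \<subseteq> {..<n} \<and> card I = m}"
    by (rule disjoint_family_on_mono[rotated]) auto
  fix I assume "I \<in> {I. I \<subseteq> {..<n} \<and> card I = m}"
  then have I: "I \<subseteq> {..<n}" "card I = m" by auto
  show "cell n s I \<in> sets (exp_sample n)" by (rule cell_in_sets)
  show "measure (exp_sample n) (cell n s I) > 0" using measure_cell[OF I(1)] assms(2) by simp
  show "A \<inter> cell n s I \<in> sets (exp_sample n)"
    "measure (exp_sample n) (A \<inter> cell n s I) = c * measure (exp_sample n) (cell n s I)"
    using assms(3,4)[OF I] by auto
qed

lemma exp_minus_split: "exp (- t) = exp (- s) * exp (- (t - s :: real))"
  by (simp flip: exp_add)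

lemma cond_prob_overshoot:
  assumes "1 \<le> m" "m \<le> n" "0 < s" "s < t"
  shows "cond_prob (exp_sample n) {w \<in> space (exp_sample n). ord_stat n w m < ereal t}
      (cond_event n m s) = 1 - exp (- (t - s)) ^ m"
proof (rule cond_prob_from_cells[OF assms(2,3)])
  interpret prob_space "exp_sample n" by (rule prob_space_exp_sample)
  fix I assume I: "I \<subseteq> {..<n}" "card I = m"
  note eq = overshoot_in_cell[OF I assms]
  show "{w \<in> space (exp_sample n). ord_stat n w m < ereal t} \<inter> cell n s I \<in> sets (exp_sample n)"
    unfolding eq by (intro sets.Diff cell_in_sets cell_top_in_sets)
  have "cell_top n s t I \<subseteq> cell n s I"
    unfolding cell_top_def cell_def using assms by (intro PiE_mono) auto
  then have "measure (exp_sample n) (cell n s I - cell_top n s t I)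
      = measure (exp_sample n) (cell n s I) - measure (exp_sample n) (cell_top n s t I)"
    by (intro finite_measure_Diff cell_in_sets cell_top_in_sets)
  also have "\<dots> = (1 - exp (- (t - s)) ^ m) * measure (exp_sample n) (cell n s I)"
    using measure_cell[OF I(1)] measure_cell_top[OF I(1)] I(2) assms exp_minus_split[of t s]
    by (simp add: power_mult_distrib algebra_simps)
  finally show "measure (exp_sample n) ({w \<in> space (exp_sample n). ord_stat n w m < ereal t}
      \<inter> cell n s I) = (1 - exp (- (t - s)) ^ m) * measure (exp_sample n) (cell n s I)"
    unfolding eq .
qed


lemma cond_prob_exact_pass:
  assumes "1 \<le> k" "k \<le> m" "m \<le> n" "0 < s" "s < t"
  shows "cond_prob (exp_sample n) {w \<in> space (exp_sample n). ord_stat n w (m - k + 1) < ereal t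
      \<and> ereal t < ord_stat n w (m - k)} (cond_event n m s)
    = real (m choose k) * exp (- (t - s)) ^ (m - k) * (1 - exp (- (t - s))) ^ k"
proof (rule cond_prob_from_cells[OF assms(3,4)])
  interpret prob_space "exp_sample n" by (rule prob_space_exp_sample)
  fix I assume I: "I \<subseteq> {..<n}" "card I = m"
  let ?A = "{w \<in> space (exp_sample n). ord_stat n w (m - k + 1) < ereal t
      \<and> ereal t < ord_stat n w (m - k)}"
  let ?JJ = "{J. J \<subseteq> I \<and> card J = m - k}"
  note eq = exact_pass_in_cell[OF I assms(2-5)]
  have finI: "finite I" using finite_subset[OF I(1)] by simp
  then have fin: "finite ?JJ" by simp
  show "?A \<inter> cell n s I \<in> sets (exp_sample n)"
    unfolding eq by (intro sets.finite_UN fin cell_split_in_sets)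
  have disj: "disjoint_family_on (cell_split n s t I) ?JJ"
  proof -
    have "disjoint_family_on (cell_split n s t I) (Pow {..<n})"
      unfolding cell_split_def by (rule disjoint_pattern_boxes) (use assms(5) in auto)
    then show ?thesis by (rule disjoint_family_on_mono[rotated]) (use I in auto)
  qed
  define a where "a = exp (- s)"
  define b where "b = exp (- (t - s))"
  have "measure (exp_sample n) (?A \<inter> cell n s I)
      = (\<Sum>J\<in>?JJ. measure (exp_sample n) (cell_split n s t I J))"
    unfolding eq by (intro finite_measure_finite_Union fin disj) (auto intro: cell_split_in_sets)
  also have "\<dots> = (\<Sum>J\<in>?JJ. (a * b) ^ (m - k) * (a - a * b) ^ k * (1 - a) ^ (n - m))"
    using I assms measure_cell_split exp_minus_split[of t s]
    by (intro sum.cong) (auto simp: a_def b_def)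
  also have "\<dots> = real (m choose k) * ((a * b) ^ (m - k) * (a - a * b) ^ k * (1 - a) ^ (n - m))"
    using n_subsets[OF finI, of "m - k"] I assms binomial_symmetric[of k m] by simp
  also have "\<dots> = (real (m choose k) * b ^ (m - k) * (1 - b) ^ k) * (a ^ m * (1 - a) ^ (n - m))"
  proof -
    have "a ^ m = a ^ (m - k) * a ^ k" using assms(2) by (simp flip: power_add)
    moreover have "(a - a * b) ^ k = a ^ k * (1 - b) ^ k"
      by (simp flip: power_mult_distrib add: algebra_simps)
    ultimately show ?thesis by (simp add: power_mult_distrib algebra_simps)
  qed
  finally show "measure (exp_sample n) (?A \<inter> cell n s I)
      = real (m choose k) * exp (- (t - s)) ^ (m - k) * (1 - exp (- (t - s))) ^ k
        * measure (exp_sample n) (cell n s I)"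
    using measure_cell[OF I(1)] I(2) assms by (simp add: a_def b_def)
qed


definition overshoot_prob :: "nat \<Rightarrow> real \<Rightarrow> real" where
  "overshoot_prob m y = (if 0 < y then 1 - exp (- y) ^ m else 0)"

definition exact_pass_prob :: "nat \<Rightarrow> nat \<Rightarrow> real \<Rightarrow> real" where
  "exact_pass_prob m k y =
     (if 0 < y then real (m choose k) * exp (- y) ^ (m - k) * (1 - exp (- y)) ^ k else 0)"

lemma cond_prob_overshoot_jump:
  assumes "1 \<le> m" "m \<le> n" "0 < s"
  shows "cond_prob (exp_sample n) {w \<in> space (exp_sample n). ord_stat n w m < ereal (s + y)}
      (cond_event n m s) = overshoot_prob m y"
proof (cases "0 < y")
  case True
  then show ?thesis using cond_prob_overshoot[OF assms, of "s + y"] by (simp add: overshoot_prob_def)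
next
  case False
  have "ereal (s + y) < ord_stat n w m" if "w \<in> cond_event n m s" for w
    using False that unfolding cond_event_def by (auto intro: le_less_trans[of _ "ereal s"])
  then have "{w \<in> space (exp_sample n). ord_stat n w m < ereal (s + y)} \<inter> cond_event n m s = {}"
    using not_less_iff_gr_or_eq by blast
  then show ?thesis using False by (simp add: cond_prob_def overshoot_prob_def)
qed

lemma cond_prob_exact_pass_jump:
  assumes "1 \<le> k" "k \<le> m" "m \<le> n" "0 < s"
  shows "cond_prob (exp_sample n) {w \<in> space (exp_sample n). ord_stat n w (m - k + 1) < ereal (s + y)
      \<and> ereal (s + y) < ord_stat n w (m - k)} (cond_event n m s) = exact_pass_prob m k y"
proof (cases "0 < y")
  case True
  then show ?thesis
    using cond_prob_exact_pass[OF assms, of "s + y"] by (simp add: exact_pass_prob_def)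
next
  case False
  have "ereal (s + y) < ord_stat n w (m - k + 1)" if "w \<in> cond_event n m s" for w
  proof -
    have "ereal (s + y) < ord_stat n w m"
      using False that unfolding cond_event_def by (auto intro: le_less_trans[of _ "ereal s"])
    also have "\<dots> \<le> ord_stat n w (m - k + 1)"
      using assms by (intro ord_stat_antimono) auto
    finally show ?thesis .
  qed
  then have "{w \<in> space (exp_sample n). ord_stat n w (m - k + 1) < ereal (s + y)
      \<and> ereal (s + y) < ord_stat n w (m - k)} \<inter> cond_event n m s = {}"
    using not_less_iff_gr_or_eq by blast
  then show ?thesis using False by (simp add: cond_prob_def exact_pass_prob_def)
qed

(* Integrals against the Levy measure are integrals against nu after y = -ln(1 - x); the
   bound g x <= C x makes g integrable under the first-moment condition on nu. *)
lemma levy_integral_transfer: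
  fixes \<nu> :: "real measure" and h g :: "real \<Rightarrow> real" and C :: real
  assumes nu: "sets \<nu> = sets borel" and supp: "emeasure \<nu> (UNIV - {0<..<1}) = 0"
    and fin: "(\<integral>\<^sup>+ x. ennreal x \<partial>\<nu>) < \<infinity>"
    and hm: "h \<in> borel_measurable borel" and gm: "g \<in> borel_measurable borel"
    and pull: "\<And>x. 0 < x \<Longrightarrow> x < 1 \<Longrightarrow> h (- ln (1 - x)) = g x \<and> 0 \<le> g x \<and> g x \<le> C * x"
  shows "(\<integral>\<^sup>+ y. ennreal (h y) \<partial>levy_measure \<nu>) = ennreal (\<integral>x. g x \<partial>\<nu>)"
proof -
  have meas: "\<And>f. f \<in> borel_measurable borel \<Longrightarrow> f \<in> borel_measurable \<nu>"
    by (subst measurable_cong_sets[OF nu refl])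
  have AE01: "AE x in \<nu>. 0 < x \<and> x < 1"
  proof (rule AE_I')
    show "UNIV - {0<..<1} \<in> null_sets \<nu>" using supp nu by (auto simp: null_sets_def)
  qed auto
  have "(\<integral>\<^sup>+ y. ennreal (h y) \<partial>levy_measure \<nu>) = (\<integral>\<^sup>+ x. ennreal (h (- ln (1 - x))) \<partial>\<nu>)"
    unfolding levy_measure_def by (rule nn_integral_distr[OF meas]) (use hm in simp_all)
  also have "\<dots> = (\<integral>\<^sup>+ x. ennreal (g x) \<partial>\<nu>)"
    by (rule nn_integral_cong_AE, rule eventually_mono[OF AE01]) (simp add: pull)
  also have "\<dots> = ennreal (\<integral>x. g x \<partial>\<nu>)"
  proof (rule nn_integral_eq_integral)
    have "(\<integral>\<^sup>+ x. ennreal (norm x) \<partial>\<nu>) = (\<integral>\<^sup>+ x. ennreal x \<partial>\<nu>)"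
      by (rule nn_integral_cong_AE) (use AE01 in \<open>auto elim!: eventually_mono\<close>)
    then have "integrable \<nu> (\<lambda>x. x)"
      using fin by (intro integrableI_bounded[OF meas]) simp_all
    then have "integrable \<nu> (\<lambda>x. C * x)" by simp
    then show "integrable \<nu> g"
    proof (rule Bochner_Integration.integrable_bound)
      show "g \<in> borel_measurable \<nu>" by (rule meas[OF gm])
      show "AE x in \<nu>. norm (g x) \<le> norm (C * x)"
        using AE01 by (rule eventually_mono) (use pull in force)
    qed
    show "AE x in \<nu>. 0 \<le> g x" using AE01 by (rule eventually_mono) (use pull in auto)
  qed
  finally show ?thesis .
qed

(* Under y = -ln(1 - x) the profiles become 1 - (1-x)^m and the binomial term of varphi,
   both bounded by a multiple of x (Bernoulli's inequality for the first). *)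
lemma overshoot_prob_pullback:
  assumes "0 < x" "x < (1::real)"
  shows "overshoot_prob m (- ln (1 - x)) = 1 - (1 - x) powr real m
     \<and> 0 \<le> 1 - (1 - x) powr real m \<and> 1 - (1 - x) powr real m \<le> real m * x"
proof -
  have "1 + real m * (- x) \<le> (1 + - x) ^ m" by (rule Bernoulli_inequality) (use assms in simp)
  moreover have "(1 - x) ^ m \<le> 1" using assms by (intro power_le_one) auto
  ultimately show ?thesis
    using assms by (simp add: overshoot_prob_def powr_realpow ln_less_zero)
qed

lemma exact_pass_prob_pullback:
  assumes "0 < x" "x < (1::real)" "1 \<le> k"
  shows "exact_pass_prob m k (- ln (1 - x)) = real (m choose k) * (x ^ k * (1 - x) ^ (m - k))
     \<and> 0 \<le> real (m choose k) * (x ^ k * (1 - x) ^ (m - k))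
     \<and> real (m choose k) * (x ^ k * (1 - x) ^ (m - k)) \<le> real (m choose k) * x"
proof -
  have "x ^ k * (1 - x) ^ (m - k) \<le> x ^ k" using assms by (simp add: mult_left_le power_le_one)
  also have "x ^ k \<le> x ^ 1" using assms by (intro power_decreasing) auto
  finally have "real (m choose k) * (x ^ k * (1 - x) ^ (m - k)) \<le> real (m choose k) * x"
    by (intro mult_left_mono) simp_all
  then show ?thesis using assms by (simp add: exact_pass_prob_def ln_less_zero mult_ac)
qed

theorem lemma1:
  fixes \<nu> :: "real measure" and n m k :: nat and s :: real
  assumes "sets \<nu> = sets borel"
    and "emeasure \<nu> (UNIV - {0<..<1}) = 0"
    and "(\<integral>\<^sup>+ x. ennreal x \<partial>\<nu>) < \<infinity>"
    and "1 \<le> k" and "k \<le> m" and "m \<le> n"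
    and "0 < s"
  shows "jump_rate \<nu> n m s (\<lambda>w y. ord_stat n w m < ereal (s + y))
           = ennreal (Phi \<nu> (real m))
       \<and> jump_rate \<nu> n m s (\<lambda>w y. ord_stat n w (m - k + 1) < ereal (s + y)
                                    \<and> ereal (s + y) < ord_stat n w (m - k))
           = ennreal (varphi \<nu> m k)"
proof
  have m: "1 \<le> m" using assms(4,5) by simp
  have "jump_rate \<nu> n m s (\<lambda>w y. ord_stat n w m < ereal (s + y))
      = (\<integral>\<^sup>+ y. ennreal (overshoot_prob m y) \<partial>levy_measure \<nu>)"
    unfolding jump_rate_def cond_prob_overshoot_jump[OF m assms(6,7)] ..
  also have "\<dots> = ennreal (\<integral>x. 1 - (1 - x) powr real m \<partial>\<nu>)"
    by (rule levy_integral_transfer[OF assms(1-3) _ _ overshoot_prob_pullback])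
      (unfold overshoot_prob_def, measurable)
  finally show "jump_rate \<nu> n m s (\<lambda>w y. ord_stat n w m < ereal (s + y))
      = ennreal (Phi \<nu> (real m))" by (simp only: Phi_def)
next
  have "jump_rate \<nu> n m s (\<lambda>w y. ord_stat n w (m - k + 1) < ereal (s + y)
                               \<and> ereal (s + y) < ord_stat n w (m - k))
      = (\<integral>\<^sup>+ y. ennreal (exact_pass_prob m k y) \<partial>levy_measure \<nu>)"
    unfolding jump_rate_def cond_prob_exact_pass_jump[OF assms(4-7)] ..
  also have "\<dots> = ennreal (\<integral>x. real (m choose k) * (x ^ k * (1 - x) ^ (m - k)) \<partial>\<nu>)"
    by (rule levy_integral_transfer[OF assms(1-3) _ _ exact_pass_prob_pullback[OF _ _ assms(4)]])
      (unfold exact_pass_prob_def, measurable)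
  finally show "jump_rate \<nu> n m s (\<lambda>w y. ord_stat n w (m - k + 1) < ereal (s + y)
                               \<and> ereal (s + y) < ord_stat n w (m - k))
      = ennreal (varphi \<nu> m k)" by (simp add: varphi_def lam_def)
qed

end
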